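(* Let $G,H$ be countable discrete groups. Let $\Omega,\Delta$ be sets, each with commuting left $G$- and right $H$-actions, both free $H$-sets; let $\Omega=\Omega'\cup X$ (disjoint) where $\Delta$ and $\Omega'$ are free $G$-sets and $X$ consists of $r$ $H$-orbits, $1\le r<\infty$; and let $\phi\colon\Delta\to\Omega$ be a bijective right $H$-equivariant map. Let $T\subset\Delta$ be a set of representatives of the $H$-orbits of $\Delta$, $S=\phi(T)$, $S'=S\cap\Omega'$, $S''=S\cap X$. Put $E=l^2(T)\otimes_{\mathbb{C}}C^*_rH\subset l^2(\Delta)$, $F=l^2(S)\otimes_{\mathbb{C}}C^*_rH\subset l^2(\Omega)$, $F'=l^2(S')\otimes_{\mathbb{C}}C^*_rH$, $F''=l^2(S'')\otimes_{\mathbb{C}}C^*_rH$, so $F=F'\oplus F''$. For $B\in M_n(C^*_rG)$ let $B_\Delta\in\mathcal{B}(E^n)$ be its image under the representation induced by the $G$-action on $\Delta$, and $B_\Omega\in\mathcal{B}(F^n)$ the image under the representation induced by the $G$-action on $\Omega'$ on $F'^n$, extended by $0$ on $F''^n$. Let $\phi\colon E^n\to F^n$ also denote the unitary Hilbert $C^*_rH$-module map induced by $\phi$. Suppose $A\in M_n(C^*_rG)$ is such that $A_\Delta-\phi^*A_\Omega\phi\colon E^n\to E^n$ is of $H$-trace class. Then $$\operatorname{tr}_G(A)=\tfrac1r\operatorname{tr}_H(A_\Delta-\phi^*A_\Omega\phi).$$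
   Context: $C^*_r\Gamma$ is the reduced group $C^*$-algebra and $\operatorname{tr}_G$ the canonical trace on $M_n(C^*_rG)$ (sum over diagonal entries of the coefficient of the identity). $E$ is the Hilbert $C^*_rH$-module direct sum of copies of $C^*_rH$ indexed by $T$, viewed in $l^2(\Delta)$ via $E\otimes_{C^*_rH}l^2H\cong l^2(\Delta)$; similarly for $F,F',F''$. $\mathcal{B}(\cdot)$ denotes bounded adjointable module maps. $H$-trace class: $B\in\mathcal{B}(E)$ maps to $B_{l^2\Delta}=B\otimes1\in\mathcal{B}(l^2(\Delta))$; $B$ is of $H$-trace class if $\sum_{t\in T}\langle t,|B_{l^2\Delta}|t\rangle_{l^2(\Delta)}<\infty$ (where $|C|=\sqrt{C^*C}$ and $t$ denotes the characteristic function of $\{t\}$), and then $\operatorname{tr}_H(B)=\sum_{t\in T}\langle t,B_{l^2\Delta}t\rangle$. For $B=(B_{ij})\in\mathcal{B}(E^n)=M_n(\mathcal{B}(E))$, $B$ is of $H$-trace class if $|B_{l^2\Delta}|$ on $l^2(\Delta)^n$ satisfies the analogous summability, and $\operatorname{tr}_H(B)=\sum_{i=1}^n\operatorname{tr}_H(B_{ii})$. *)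

theory Defs
  imports "HOL-Analysis.Analysis" "HOL-Library.Countable"
begin

text \<open>A vector of l^2(I) is a function I => complex; a bounded operator on l^2(I)
is represented by its matrix kernel K x y = <delta_x, K delta_y>.\<close>

definition fin_supp :: "('i \<Rightarrow> complex) \<Rightarrow> bool" where
  "fin_supp \<xi> \<longleftrightarrow> finite {x. \<xi> x \<noteq> 0}"

definition is_l2 :: "('i \<Rightarrow> complex) \<Rightarrow> bool" where
  "is_l2 \<xi> \<longleftrightarrow> (\<lambda>x. (cmod (\<xi> x))\<^sup>2) summable_on UNIV"

definition l2norm :: "('i \<Rightarrow> complex) \<Rightarrow> real" where
  "l2norm \<xi> = sqrt (infsum (\<lambda>x. (cmod (\<xi> x))\<^sup>2) UNIV)"

definition kapply :: "('i \<Rightarrow> 'i \<Rightarrow> complex) \<Rightarrow> ('i \<Rightarrow> complex) \<Rightarrow> 'i \<Rightarrow> complex" where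
  "kapply K \<xi> = (\<lambda>x. \<Sum>y\<in>{y. \<xi> y \<noteq> 0}. K x y * \<xi> y)"

definition kernel_norm_le :: "('i \<Rightarrow> 'i \<Rightarrow> complex) \<Rightarrow> real \<Rightarrow> bool" where
  "kernel_norm_le K c \<longleftrightarrow>
     (\<forall>\<xi>. fin_supp \<xi> \<longrightarrow> is_l2 (kapply K \<xi>) \<and> l2norm (kapply K \<xi>) \<le> c * l2norm \<xi>)"

definition bounded_kernel :: "('i \<Rightarrow> 'i \<Rightarrow> complex) \<Rightarrow> bool" where
  "bounded_kernel K \<longleftrightarrow> (\<exists>c. kernel_norm_le K c)"

definition kadj :: "('i \<Rightarrow> 'i \<Rightarrow> complex) \<Rightarrow> 'i \<Rightarrow> 'i \<Rightarrow> complex" where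
  "kadj K = (\<lambda>x y. cnj (K y x))"

definition kcomp :: "('i \<Rightarrow> 'i \<Rightarrow> complex) \<Rightarrow> ('i \<Rightarrow> 'i \<Rightarrow> complex) \<Rightarrow> 'i \<Rightarrow> 'i \<Rightarrow> complex" where
  "kcomp K L = (\<lambda>x z. infsum (\<lambda>y. K x y * L y z) UNIV)"

definition positive_kernel :: "('i \<Rightarrow> 'i \<Rightarrow> complex) \<Rightarrow> bool" where
  "positive_kernel P \<longleftrightarrow> bounded_kernel P \<and>
     (\<forall>\<xi>. fin_supp \<xi> \<longrightarrow>
        (let q = (\<Sum>x\<in>{x. \<xi> x \<noteq> 0}. \<Sum>y\<in>{y. \<xi> y \<noteq> 0}. cnj (\<xi> x) * P x y * \<xi> y)
         in Im q = 0 \<and> Re q \<ge> 0))"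

definition kabs :: "('i \<Rightarrow> 'i \<Rightarrow> complex) \<Rightarrow> 'i \<Rightarrow> 'i \<Rightarrow> complex" where
  "kabs K = (THE P. positive_kernel P \<and> kcomp P P = kcomp (kadj K) K)"

text \<open>An element a of C*_r G is determined by f = a delta_e in l^2(G); its kernel on
l^2(G) is (x,y) |-> f(x y^-1). Membership: norm limit of finitely supported elements.\<close>
definition conv_kernel :: "('g::group_add \<Rightarrow> complex) \<Rightarrow> 'g \<Rightarrow> 'g \<Rightarrow> complex" where
  "conv_kernel f = (\<lambda>x y. f (x - y))"

definition in_CrG :: "('g::group_add \<Rightarrow> complex) \<Rightarrow> bool" where
  "in_CrG f \<longleftrightarrow> (\<forall>\<epsilon>>0. \<exists>f0. fin_supp f0 \<and> kernel_norm_le (conv_kernel (\<lambda>x. f x - f0 x)) \<epsilon>)"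

definition trG :: "nat \<Rightarrow> (nat \<Rightarrow> nat \<Rightarrow> 'g::group_add \<Rightarrow> complex) \<Rightarrow> complex" where
  "trG n A = (\<Sum>i<n. A i i 0)"

definition left_action :: "('g::group_add \<Rightarrow> 'a \<Rightarrow> 'a) \<Rightarrow> bool" where
  "left_action act \<longleftrightarrow> (\<forall>x. act 0 x = x) \<and> (\<forall>g g' x. act (g + g') x = act g (act g' x))"

definition right_action :: "('a \<Rightarrow> 'h::group_add \<Rightarrow> 'a) \<Rightarrow> bool" where
  "right_action act \<longleftrightarrow> (\<forall>x. act x 0 = x) \<and> (\<forall>x h h'. act x (h + h') = act (act x h) h')"

definition commuting_actions :: "('g \<Rightarrow> 'a \<Rightarrow> 'a) \<Rightarrow> ('a \<Rightarrow> 'h \<Rightarrow> 'a) \<Rightarrow> bool" where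
  "commuting_actions ga ha \<longleftrightarrow> (\<forall>g x h. ga g (ha x h) = ha (ga g x) h)"

definition free_right :: "('a \<Rightarrow> 'h::group_add \<Rightarrow> 'a) \<Rightarrow> bool" where
  "free_right act \<longleftrightarrow> (\<forall>x h. act x h = x \<longrightarrow> h = 0)"

definition free_left_on :: "('g::group_add \<Rightarrow> 'a \<Rightarrow> 'a) \<Rightarrow> 'a set \<Rightarrow> bool" where
  "free_left_on act A \<longleftrightarrow> (\<forall>g x. x \<in> A \<longrightarrow> act g x \<in> A) \<and>
                          (\<forall>g x. x \<in> A \<and> act g x = x \<longrightarrow> g = 0)"

definition horbit :: "('a \<Rightarrow> 'h \<Rightarrow> 'a) \<Rightarrow> 'a \<Rightarrow> 'a set" where
  "horbit act x = range (act x)"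

text \<open>Kernel of the image of f in C*_r G under the representation on l^2 of a
free G-set: <delta_x, f delta_y> = f(g) if x = g y, else 0.\<close>
definition rep_kernel :: "('g \<Rightarrow> 'a \<Rightarrow> 'a) \<Rightarrow> ('g \<Rightarrow> complex) \<Rightarrow> 'a \<Rightarrow> 'a \<Rightarrow> complex" where
  "rep_kernel act f x y = (if \<exists>g. x = act g y then f (THE g. x = act g y) else 0)"

section \<open>The operator A_Delta - phi^* A_Omega phi on l^2(Delta)^n = l^2({..<n} x Delta)\<close>

definition diff_kernel ::
  "nat \<Rightarrow> (nat \<Rightarrow> nat \<Rightarrow> 'g \<Rightarrow> complex) \<Rightarrow> ('g \<Rightarrow> 'd \<Rightarrow> 'd) \<Rightarrow> ('g \<Rightarrow> 'w \<Rightarrow> 'w)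
   \<Rightarrow> 'w set \<Rightarrow> ('d \<Rightarrow> 'w) \<Rightarrow> nat \<times> 'd \<Rightarrow> nat \<times> 'd \<Rightarrow> complex" where
  "diff_kernel n A gD gW X \<phi> = (\<lambda>(i, x) (j, y).
     if i < n \<and> j < n then
       rep_kernel gD (A i j) x y
       - (if \<phi> x \<notin> X \<and> \<phi> y \<notin> X then rep_kernel gW (A i j) (\<phi> x) (\<phi> y) else 0)
     else 0)"

definition H_trace_class :: "nat \<Rightarrow> 'd set \<Rightarrow> (nat \<times> 'd \<Rightarrow> nat \<times> 'd \<Rightarrow> complex) \<Rightarrow> bool" where
  "H_trace_class n T B \<longleftrightarrow> (\<lambda>(i, t). kabs B (i, t) (i, t)) summable_on ({..<n} \<times> T)"

definition trH :: "nat \<Rightarrow> 'd set \<Rightarrow> (nat \<times> 'd \<Rightarrow> nat \<times> 'd \<Rightarrow> complex) \<Rightarrow> complex" where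
  "trH n T B = (\<Sum>i<n. infsum (\<lambda>t. B (i, t) (i, t)) T)"

end

theory Submission
  imports Defs
begin

text \<open>Only diagonal entries enter the H-trace. At (i, t) the kernel of A_Delta is the
  identity coefficient of A i i, since G acts freely on Delta; the kernel of
  phi^* A_Omega phi has the same entry when phi t lies in the free part Omega' and
  vanishes when phi t lies in X. Hence each diagonal block of the difference
  contributes A i i 0 once for every representative t with phi t in X. As phi is an
  H-equivariant bijection, these representatives form a transversal of the H-orbits
  in X, so there are r of them.\<close>

lemma rep_kernel_diag:
  assumes "left_action act" and "free_left_on act A" and "x \<in> A"
  shows "rep_kernel act f x x = f 0"
proof -
  have fix0: "x = act 0 x"
    using assms(1) unfolding left_action_def by simp
  have "(THE g. x = act g x) = 0"
  proof (rule the_equality)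
    show "x = act 0 x" by (fact fix0)
    show "g = 0" if "x = act g x" for g
      using assms(2,3) that unfolding free_left_on_def by metis
  qed
  then show ?thesis
    using fix0 unfolding rep_kernel_def by auto
qed

lemma mem_horbit_self:
  assumes "right_action act"
  shows "x \<in> horbit act x"
  using assms unfolding horbit_def right_action_def by (metis rangeI)

lemma horbit_act:
  assumes "right_action act"
  shows "horbit act (act x h) = horbit act x"
proof -
  have compose: "act (act x h) k = act x (h + k)" for k
    using assms unfolding right_action_def by simp
  have "act x k = act (act x h) (- h + k)" for k
    unfolding compose by (simp add: add.assoc[symmetric])
  then have "horbit act x \<subseteq> horbit act (act x h)"
    unfolding horbit_def by (blast intro: range_eqI)
  moreover have "horbit act (act x h) \<subseteq> horbit act x"
    using compose unfolding horbit_def by (blast intro: range_eqI)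
  ultimately show ?thesis by blast
qed

lemma horbit_eq_if_mem:
  assumes "right_action act" and "y \<in> horbit act x"
  shows "horbit act y = horbit act x"
proof -
  obtain h where "y = act x h" using assms(2) unfolding horbit_def by auto
  then show ?thesis using horbit_act[OF assms(1)] by simp
qed

lemma horbit_equivariant_image:
  assumes "\<forall>d h. \<phi> (hD d h) = hW (\<phi> d) h"
  shows "horbit hW (\<phi> d) = \<phi> ` horbit hD d"
  using assms unfolding horbit_def by (simp add: image_image)

lemma horbit_subset_invariant:
  assumes "\<forall>x h. x \<in> X \<longrightarrow> act x h \<in> X" and "x \<in> X"
  shows "horbit act x \<subseteq> X"
  using assms unfolding horbit_def by auto

lemma transversal_equivariant_image:
  assumes "bij \<phi>" and "\<forall>d h. \<phi> (hD d h) = hW (\<phi> d) h"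
    and "\<forall>x. \<exists>!t. t \<in> T \<and> x \<in> horbit hD t"
  shows "\<forall>y. \<exists>!s. s \<in> \<phi> ` T \<and> y \<in> horbit hW s"
proof
  fix y
  obtain x where y: "y = \<phi> x"
    using assms(1) by (metis bij_pointE)
  have mem_iff: "y \<in> horbit hW (\<phi> t) \<longleftrightarrow> x \<in> horbit hD t" for t
    using y horbit_equivariant_image[OF assms(2)] bij_is_inj[OF assms(1)]
    by (simp add: inj_image_mem_iff)
  obtain t where t: "t \<in> T" "x \<in> horbit hD t"
    and unique: "\<And>t'. t' \<in> T \<Longrightarrow> x \<in> horbit hD t' \<Longrightarrow> t' = t"
    using assms(3) by blast
  show "\<exists>!s. s \<in> \<phi> ` T \<and> y \<in> horbit hW s"
  proof
    show "\<phi> t \<in> \<phi> ` T \<and> y \<in> horbit hW (\<phi> t)"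
      using t mem_iff by blast
    show "s = \<phi> t" if "s \<in> \<phi> ` T \<and> y \<in> horbit hW s" for s
      using that mem_iff unique by blast
  qed
qed

lemma bij_betw_transversal_horbits:
  assumes "right_action act" and "\<forall>x. \<exists>!s. s \<in> S \<and> x \<in> horbit act s"
    and "\<forall>x h. x \<in> X \<longrightarrow> act x h \<in> X"
  shows "bij_betw (horbit act) (S \<inter> X) (horbit act ` X)"
proof (rule bij_betw_imageI)
  show "inj_on (horbit act) (S \<inter> X)"
  proof (rule inj_onI)
    fix s s' assume "s \<in> S \<inter> X" "s' \<in> S \<inter> X" "horbit act s = horbit act s'"
    then show "s = s'"
      using assms(2) mem_horbit_self[OF assms(1), of s'] by blast
  qed
  show "horbit act ` (S \<inter> X) = horbit act ` X"
  proof
    show "horbit act ` X \<subseteq> horbit act ` (S \<inter> X)"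
    proof
      fix Q assume "Q \<in> horbit act ` X"
      then obtain x where x: "x \<in> X" "Q = horbit act x" by auto
      obtain s where s: "s \<in> S" "x \<in> horbit act s"
        using assms(2) by blast
      have orbit: "horbit act s = Q"
        using horbit_eq_if_mem[OF assms(1) s(2)] x(2) by simp
      have "s \<in> X"
        using mem_horbit_self[OF assms(1), of s] horbit_subset_invariant[OF assms(3) x(1)]
          orbit x(2) by blast
      then show "Q \<in> horbit act ` (S \<inter> X)"
        using s(1) orbit by blast
    qed
  qed auto
qed

lemma card_transversal_over_invariant:
  assumes "right_action hW" and "bij \<phi>" and "\<forall>d h. \<phi> (hD d h) = hW (\<phi> d) h"
    and "\<forall>x. \<exists>!t. t \<in> T \<and> x \<in> horbit hD t"
    and "\<forall>x h. x \<in> X \<longrightarrow> hW x h \<in> X" and "finite (horbit hW ` X)"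
  shows "finite {t \<in> T. \<phi> t \<in> X}" and "card {t \<in> T. \<phi> t \<in> X} = card (horbit hW ` X)"
proof -
  have orbits: "bij_betw (horbit hW) (\<phi> ` T \<inter> X) (horbit hW ` X)"
    using bij_betw_transversal_horbits[OF assms(1) transversal_equivariant_image[OF assms(2-4)] assms(5)] .
  have "bij_betw \<phi> {t \<in> T. \<phi> t \<in> X} (\<phi> ` T \<inter> X)"
    using bij_is_inj[OF assms(2)] by (auto simp: bij_betw_def inj_on_def)
  then have reps: "bij_betw (horbit hW \<circ> \<phi>) {t \<in> T. \<phi> t \<in> X} (horbit hW ` X)"
    using orbits by (rule bij_betw_trans)
  show "finite {t \<in> T. \<phi> t \<in> X}"
    using reps assms(6) bij_betw_finite by blast
  show "card {t \<in> T. \<phi> t \<in> X} = card (horbit hW ` X)"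
    using reps bij_betw_same_card by blast
qed

lemma diff_kernel_diag:
  assumes "left_action gD" and "free_left_on gD UNIV"
    and "left_action gW" and "free_left_on gW (- X)" and "i < n"
  shows "diff_kernel n A gD gW X \<phi> (i, t) (i, t) = (if \<phi> t \<in> X then A i i 0 else 0)"
  using assms rep_kernel_diag[OF assms(1,2)] rep_kernel_diag[OF assms(3,4)]
  unfolding diff_kernel_def by auto

lemma trH_diff_kernel:
  assumes "left_action gD" and "free_left_on gD UNIV"
    and "left_action gW" and "free_left_on gW (- X)"
    and "finite {t \<in> T. \<phi> t \<in> X}"
  shows "trH n T (diff_kernel n A gD gW X \<phi>) = of_nat (card {t \<in> T. \<phi> t \<in> X}) * trG n A"
proof -
  let ?S = "{t \<in> T. \<phi> t \<in> X}"
  have "infsum (\<lambda>t. diff_kernel n A gD gW X \<phi> (i, t) (i, t)) T = of_nat (card ?S) * A i i 0"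
    if "i < n" for i
  proof -
    have "infsum (\<lambda>t. diff_kernel n A gD gW X \<phi> (i, t) (i, t)) T
        = infsum (\<lambda>t. if \<phi> t \<in> X then A i i 0 else 0) T"
      using diff_kernel_diag[OF assms(1-4) that] by simp
    also have "\<dots> = infsum (\<lambda>t. if \<phi> t \<in> X then A i i 0 else 0) ?S"
      by (rule infsum_cong_neutral) auto
    also have "\<dots> = of_nat (card ?S) * A i i 0"
      using assms(5) by simp
    finally show ?thesis .
  qed
  then show ?thesis
    unfolding trH_def trG_def by (simp add: sum_distrib_left)
qed
theorem lemma2p6:
  fixes gD :: "'g::{group_add,countable} \<Rightarrow> 'd \<Rightarrow> 'd"
    and hD :: "'d \<Rightarrow> 'h::{group_add,countable} \<Rightarrow> 'd"
    and gW :: "'g \<Rightarrow> 'w \<Rightarrow> 'w"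
    and hW :: "'w \<Rightarrow> 'h \<Rightarrow> 'w"
    and X :: "'w set" and r :: nat
    and \<phi> :: "'d \<Rightarrow> 'w" and T :: "'d set"
    and n :: nat and A :: "nat \<Rightarrow> nat \<Rightarrow> 'g \<Rightarrow> complex"
  assumes "left_action gD" and "right_action hD" and "commuting_actions gD hD"
    and "left_action gW" and "right_action hW" and "commuting_actions gW hW"
    and "free_right hD" and "free_right hW"
    and "free_left_on gD UNIV" and "free_left_on gW (- X)"
    and "\<forall>x h. x \<in> X \<longrightarrow> hW x h \<in> X"
    and "finite (horbit hW ` X)" and "card (horbit hW ` X) = r" and "1 \<le> r"
    and "bij \<phi>" and "\<forall>d h. \<phi> (hD d h) = hW (\<phi> d) h"
    and "\<forall>x. \<exists>!t. t \<in> T \<and> x \<in> horbit hD t"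
    and "\<forall>i<n. \<forall>j<n. in_CrG (A i j)"
    and "H_trace_class n T (diff_kernel n A gD gW X \<phi>)"
  shows "trG n A = (1 / of_nat r) * trH n T (diff_kernel n A gD gW X \<phi>)"
proof -
  note reps = card_transversal_over_invariant[OF assms(5,15,16,17,11,12)]
  have "trH n T (diff_kernel n A gD gW X \<phi>) = of_nat r * trG n A"
    using trH_diff_kernel[OF assms(1,9,4,10) reps(1)] reps(2) assms(13) by simp
  then show ?thesis
    using assms(14) by simp
qed

end
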